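(* Let $1\le p\le q$, $n=p+q$, and let $\mu=(a_1,\dots,a_p\mid b_1,\dots,b_q)\in\mathbb{Z}^n$ be $\Delta^+(\mathfrak{k},\mathfrak{t})$-dominant and u-large with $\mu-\beta$ also $\Delta^+(\mathfrak{k},\mathfrak{t})$-dominant. If $a_1\le q$, $b_1\ge p+1$ and $a_1+b_1\ge 2p+q$, then no $\tau\in\Omega_{p,q}$ is $\mu$-deficient. Likewise, if $a_1\ge q+1$, $b_1\le p$ and $a_1+b_1\ge p+2q$, then no $\tau\in\Omega_{p,q}$ is $\mu$-deficient.
   Context: Weights are vectors in $\mathbb{R}^n$ written $(x_1,\dots,x_p\mid y_1,\dots,y_q)$, Euclidean norm $\|\cdot\|$. $\rho_c=(p,\dots,1\mid q,\dots,1)$, $\beta=(1,0,\dots,0\mid1,0,\dots,0)$. $\Delta^+(\mathfrak{k},\mathfrak{t})$-dominant means $x_1\ge\cdots\ge x_p\ge0$, $y_1\ge\cdots\ge y_q\ge0$. For $\nu\in\mathbb{Z}^n$, $\{\nu\}$ is obtained by taking absolute values of all coordinates and sorting the first $p$ and last $q$ coordinates separately in decreasing order; $\|\nu\|_{\mathfrak{k}}=\|\{\nu\}+\rho_c\|$. $\Omega_{p,q}$ is the set of $(x\mid y)\in\mathbb{Z}^n$ with $q\ge x_1\ge\cdots\ge x_p\ge0$ and $y_j=\#\{i\mid q-x_i\ge j\}$ ($1\le j\le q$). $\tau\in\Omega_{p,q}$ is $\mu$-deficient if $\|\mu-\tau\|_{\mathfrak{k}}\le\|\mu-\tau-\beta\|_{\mathfrak{k}}$.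 $\mu$ is u-large iff there exist $0\le f\le p$, $0\le g\le q$ with $\sum_{i=1}^f a_i+\sum_{j=1}^g b_j>2pq-2(p-f)(q-g)$. *)

theory Defs
  imports "HOL-Analysis.Analysis"
begin

text \<open>Weights in Z^n, n = p+q, are represented as integer lists of length p+q:
  the first p entries are x_1..x_p, the last q entries are y_1..y_q.
  Entry x_i is v ! (i-1), entry y_j is v ! (p+j-1).\<close>

definition wadd :: "int list \<Rightarrow> int list \<Rightarrow> int list" where
  "wadd u v = map2 (+) u v"

definition wsub :: "int list \<Rightarrow> int list \<Rightarrow> int list" where
  "wsub u v = map2 (-) u v"

definition wnorm :: "int list \<Rightarrow> real" where
  "wnorm v = sqrt (\<Sum>z\<leftarrow>v. (real_of_int z)^2)"

definition rho_c :: "nat \<Rightarrow> nat \<Rightarrow> int list" where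
  "rho_c p q = map int (rev [1..<p+1]) @ map int (rev [1..<q+1])"

definition beta :: "nat \<Rightarrow> nat \<Rightarrow> int list" where
  "beta p q = (1 # replicate (p-1) 0) @ (1 # replicate (q-1) 0)"

definition dec_nonneg :: "int list \<Rightarrow> bool" where
  "dec_nonneg xs \<longleftrightarrow> sorted_wrt (\<ge>) xs \<and> (\<forall>z\<in>set xs. z \<ge> 0)"

definition k_dominant :: "nat \<Rightarrow> nat \<Rightarrow> int list \<Rightarrow> bool" where
  "k_dominant p q v \<longleftrightarrow> length v = p + q \<and> dec_nonneg (take p v) \<and> dec_nonneg (drop p v)"

definition bracket :: "nat \<Rightarrow> int list \<Rightarrow> int list" where
  "bracket p v = rev (sort (map abs (take p v))) @ rev (sort (map abs (drop p v)))"

definition knorm :: "nat \<Rightarrow> nat \<Rightarrow> int list \<Rightarrow> real" where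
  "knorm p q v = wnorm (wadd (bracket p v) (rho_c p q))"

definition Omega :: "nat \<Rightarrow> nat \<Rightarrow> int list set" where
  "Omega p q = {v. length v = p + q \<and>
      (\<forall>i<p. 0 \<le> v ! i \<and> v ! i \<le> int q) \<and> sorted_wrt (\<ge>) (take p v) \<and>
      (\<forall>j\<in>{1..q}. v ! (p + j - 1) = int (card {i\<in>{1..p}. int q - v ! (i - 1) \<ge> int j}))}"

definition deficient :: "nat \<Rightarrow> nat \<Rightarrow> int list \<Rightarrow> int list \<Rightarrow> bool" where
  "deficient p q \<mu> \<tau> \<longleftrightarrow>
     knorm p q (wsub \<mu> \<tau>) \<le> knorm p q (wsub (wsub \<mu> \<tau>) (beta p q))"

definition u_large :: "nat \<Rightarrow> nat \<Rightarrow> int list \<Rightarrow> bool" where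
  "u_large p q v \<longleftrightarrow> (\<exists>f\<le>p. \<exists>g\<le>q.
     (\<Sum>i=1..f. v ! (i - 1)) + (\<Sum>j=1..g. v ! (p + j - 1))
       > 2 * int p * int q - 2 * (int p - int f) * (int q - int g))"

end

theory Submission
  imports Defs
begin

text \<open>For a block w of length m, the squared norm of {w} + \<rho> equals
  sum_i w_i^2 + sum_(i,j) max |w_i| |w_j| + sum_i |w_i| + sum_(r=1..m) r^2, an expression
  symmetric in the entries of w. Hence lowering the first entry c of a block by one raises it
  by at most 2m + 1 - 2c, and lowers it by at least 2c + 1 when c \<ge> 1, wherever that entry
  ends up after sorting. Subtracting \<beta> from \<nu> = \<mu> - \<tau> lowers the first entry of both blocks.
  For \<tau> in Omega one has x_1 \<le> q, y_1 \<le> p and x_1 + y_1 < p + q, so either hypothesis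
  makes one head of \<nu> positive and the sum of both heads exceed the length of the other block;
  then the two changes add up to a strict decrease of the k-norm.\<close>

definition pair_max_sum :: "int list \<Rightarrow> int" where
  "pair_max_sum u = (\<Sum>x\<leftarrow>u. \<Sum>y\<leftarrow>u. max x y)"

definition block_energy :: "int list \<Rightarrow> int" where
  "block_energy w = (\<Sum>z\<leftarrow>w. z\<^sup>2) + pair_max_sum (map abs w) + (\<Sum>z\<leftarrow>w. \<bar>z\<bar>)"

lemma sum_list_map_mset_eq:
  fixes f :: "'a \<Rightarrow> 'b::comm_monoid_add"
  assumes "mset xs = mset ys"
  shows "(\<Sum>x\<leftarrow>xs. f x) = (\<Sum>y\<leftarrow>ys. f y)"
  by (metis assms mset_map sum_mset_sum_list)

lemma pair_max_sum_mset_eq: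
  assumes "mset u = mset v"
  shows "pair_max_sum u = pair_max_sum v"
proof -
  have "(\<Sum>x\<leftarrow>u. \<Sum>y\<leftarrow>u. max x y) = (\<Sum>x\<leftarrow>u. \<Sum>y\<leftarrow>v. max x y)"
    using sum_list_map_mset_eq[OF assms, of "max _"] by simp
  also have "\<dots> = (\<Sum>x\<leftarrow>v. \<Sum>y\<leftarrow>v. max x y)"
    by (rule sum_list_map_mset_eq[OF assms])
  finally show ?thesis unfolding pair_max_sum_def .
qed

lemma pair_max_sum_Cons: "pair_max_sum (a # u) = a + 2 * (\<Sum>y\<leftarrow>u. max a y) + pair_max_sum u"
proof -
  have "(\<Sum>x\<leftarrow>u. max x a) = (\<Sum>y\<leftarrow>u. max a y)"
    by (simp add: max.commute)
  then show ?thesis unfolding pair_max_sum_def by (simp add: sum_list_addf)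
qed

lemma sum_sq_sorted_add_rho:
  assumes "sorted_wrt (\<ge>) s"
  shows "(\<Sum>z\<leftarrow>map2 (+) s (map int (rev [1..<length s + 1])). z\<^sup>2)
           = (\<Sum>z\<leftarrow>s. z\<^sup>2) + pair_max_sum s + sum_list s + (\<Sum>r=1..length s. int r ^ 2)"
  using assms
proof (induction s)
  case Nil
  then show ?case by (simp add: pair_max_sum_def)
next
  case (Cons x t)
  have "(\<Sum>y\<leftarrow>t. max x y) = (\<Sum>y\<leftarrow>t. x)"
    using Cons.prems by (intro arg_cong[where f = sum_list] map_cong) auto
  then have "pair_max_sum (x # t) = x + 2 * x * int (length t) + pair_max_sum t"
    by (simp add: pair_max_sum_Cons sum_list_triv)
  then show ?case
    using Cons by (simp add: power2_eq_square algebra_simps)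
qed

lemma block_norm_sq_eq:
  "(\<Sum>z\<leftarrow>map2 (+) (rev (sort (map abs w))) (map int (rev [1..<length w + 1])). z\<^sup>2)
     = block_energy w + (\<Sum>r=1..length w. int r ^ 2)"
proof -
  let ?s = "rev (sort (map abs w))"
  have perm: "mset ?s = mset (map abs w)" by simp
  have "(\<Sum>z\<leftarrow>?s. z\<^sup>2) = (\<Sum>z\<leftarrow>w. z\<^sup>2)"
    using sum_list_map_mset_eq[OF perm, of power2] by (simp add: o_def)
  moreover have "sum_list ?s = (\<Sum>z\<leftarrow>w. \<bar>z\<bar>)"
    using sum_list_map_mset_eq[OF perm, of id] by simp
  moreover have "sorted_wrt (\<ge>) ?s" by (simp add: sorted_wrt_rev)
  ultimately show ?thesis
    using sum_sq_sorted_add_rho[of ?s] pair_max_sum_mset_eq[OF perm]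
    by (simp add: block_energy_def)
qed

lemma knorm_append_eq:
  assumes "length u = p" "length w = q"
  shows "knorm p q (u @ w) = sqrt (of_int (block_energy u + block_energy w
           + (\<Sum>r=1..p. int r ^ 2) + (\<Sum>r=1..q. int r ^ 2)))"
proof -
  have blocks: "wadd (bracket p (u @ w)) (rho_c p q)
        = map2 (+) (rev (sort (map abs u))) (map int (rev [1..<length u + 1]))
          @ map2 (+) (rev (sort (map abs w))) (map int (rev [1..<length w + 1]))"
    using assms by (simp add: wadd_def bracket_def rho_c_def zip_append)
  have int_sq: "(\<Sum>z\<leftarrow>wadd (bracket p (u @ w)) (rho_c p q). z\<^sup>2)
        = block_energy u + block_energy w + (\<Sum>r=1..p. int r ^ 2) + (\<Sum>r=1..q. int r ^ 2)"
    unfolding blocks map_append sum_list_append block_norm_sq_eq using assms by simp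
  have "(\<Sum>z\<leftarrow>wadd (bracket p (u @ w)) (rho_c p q). (real_of_int z)\<^sup>2)
        = real_of_int (\<Sum>z\<leftarrow>wadd (bracket p (u @ w)) (rho_c p q). z\<^sup>2)"
    by (simp add: sum_list_of_int[symmetric] o_def)
  then show ?thesis
    unfolding knorm_def wnorm_def int_sq by (rule arg_cong)
qed

lemma block_energy_Cons:
  "block_energy (c # t) = c\<^sup>2 + 2 * \<bar>c\<bar> + 2 * (\<Sum>y\<leftarrow>t. max \<bar>c\<bar> \<bar>y\<bar>) + block_energy t"
  by (simp add: block_energy_def pair_max_sum_Cons o_def)

lemma block_energy_lower_head:
  "block_energy ((c - 1) # t) \<le> block_energy (c # t) - 2 * c + 2 * int (length t) + 3"
proof -
  have "(\<Sum>y\<leftarrow>t. max \<bar>c - 1\<bar> \<bar>y\<bar>) \<le> (\<Sum>y\<leftarrow>t. max \<bar>c\<bar> \<bar>y\<bar> + 1)"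
    by (intro sum_list_mono) auto
  moreover have "\<bar>c - 1\<bar> \<le> \<bar>c\<bar> + 1"
    by arith
  ultimately show ?thesis
    by (simp add: block_energy_Cons sum_list_addf sum_list_triv power2_eq_square algebra_simps)
qed

lemma block_energy_lower_pos_head:
  assumes "1 \<le> c"
  shows "block_energy ((c - 1) # t) \<le> block_energy (c # t) - (2 * c + 1)"
proof -
  have "(\<Sum>y\<leftarrow>t. max \<bar>c - 1\<bar> \<bar>y\<bar>) \<le> (\<Sum>y\<leftarrow>t. max \<bar>c\<bar> \<bar>y\<bar>)"
    using assms by (intro sum_list_mono) auto
  then show ?thesis
    using assms by (simp add: block_energy_Cons power2_eq_square algebra_simps)
qed

lemma wsub_beta_Cons_append:
  assumes "length t + 1 = p" "length s + 1 = q"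
  shows "wsub ((c # t) @ (d # s)) (beta p q) = ((c - 1) # t) @ ((d - 1) # s)"
  using assms by (auto simp: wsub_def beta_def zip_append zip_replicate2 o_def)

lemma knorm_lower_heads_less:
  assumes "length t + 1 = p" "length s + 1 = q"
    and "1 \<le> d \<and> c + d > int p \<or> 1 \<le> c \<and> c + d > int q"
  shows "knorm p q (((c - 1) # t) @ ((d - 1) # s)) < knorm p q ((c # t) @ (d # s))"
proof -
  have "block_energy ((c - 1) # t) + block_energy ((d - 1) # s) < block_energy (c # t) + block_energy (d # s)"
    using assms block_energy_lower_head[of c t] block_energy_lower_head[of d s]
      block_energy_lower_pos_head[of c t] block_energy_lower_pos_head[of d s]
    by auto
  then show ?thesis
    using assms(1,2) knorm_append_eq[of "(c - 1) # t" p "(d - 1) # s" q]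
      knorm_append_eq[of "c # t" p "d # s" q]
    by simp
qed

lemma knorm_wsub_beta_less:
  assumes "1 \<le> p" "1 \<le> q" "length v = p + q"
    and "1 \<le> v ! p \<and> v ! 0 + v ! p > int p \<or> 1 \<le> v ! 0 \<and> v ! 0 + v ! p > int q"
  shows "knorm p q (wsub v (beta p q)) < knorm p q v"
proof -
  obtain c t where ct: "take p v = c # t"
    using assms(1,3) by (cases "take p v") auto
  obtain d s where ds: "drop p v = d # s"
    using assms(2,3) by (cases "drop p v") auto
  have v: "v = (c # t) @ (d # s)"
    by (metis append_take_drop_id ct ds)
  have "length t + 1 = p" "length s + 1 = q"
    using arg_cong[OF ct, of length] arg_cong[OF ds, of length] assms(3) by simp_all
  moreover have "v ! 0 = c" "v ! p = d"
    using ct ds v \<open>length t + 1 = p\<close> by (auto simp: nth_append)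
  ultimately show ?thesis
    using assms(4) v knorm_lower_heads_less[of t p s q] wsub_beta_Cons_append[of t p s q] by simp
qed

lemma Omega_head_bounds:
  assumes "\<tau> \<in> Omega p q" "1 \<le> p" "1 \<le> q"
  shows "\<tau> ! 0 \<le> int q" "\<tau> ! p \<le> int p" "\<tau> ! 0 + \<tau> ! p < int p + int q"
proof -
  let ?S = "{i \<in> {1..p}. \<tau> ! (i - 1) < int q}"
  show le_q: "\<tau> ! 0 \<le> int q"
    using assms unfolding Omega_def by auto
  have "\<forall>j\<in>{1..q}. \<tau> ! (p + j - 1) = int (card {i \<in> {1..p}. int q - \<tau> ! (i - 1) \<ge> int j})"
    using assms(1) unfolding Omega_def by blast
  then have "\<tau> ! (p + 1 - 1) = int (card {i \<in> {1..p}. int q - \<tau> ! (i - 1) \<ge> int 1})"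
    by (rule bspec) (use assms(3) in simp)
  then have "\<tau> ! p = int (card {i \<in> {1..p}. int q - \<tau> ! (i - 1) \<ge> 1})"
    by simp
  also have "{i \<in> {1..p}. int q - \<tau> ! (i - 1) \<ge> 1} = ?S"
    by auto
  finally have card: "\<tau> ! p = int (card ?S)" .
  have "card ?S \<le> card {1..p}"
    by (intro card_mono) auto
  then show "\<tau> ! p \<le> int p"
    using card by simp
  have "card ?S \<le> card {2..p}" if "\<tau> ! 0 = int q"
  proof (intro card_mono subsetI)
    fix i assume "i \<in> ?S"
    moreover from this that have "i \<noteq> 1" by auto
    ultimately show "i \<in> {2..p}" by auto
  qed simp
  then show "\<tau> ! 0 + \<tau> ! p < int p + int q"
    using card le_q \<open>card ?S \<le> card {1..p}\<close> assms(2) by (cases "\<tau> ! 0 = int q") auto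
qed

theorem mainTheorem9:
  fixes p q :: nat and \<mu> :: "int list"
  assumes "1 \<le> p" and "p \<le> q"
    and "length \<mu> = p + q"
    and "k_dominant p q \<mu>"
    and "u_large p q \<mu>"
    and "k_dominant p q (wsub \<mu> (beta p q))"
  shows "(\<mu> ! 0 \<le> int q \<and> \<mu> ! p \<ge> int p + 1 \<and> \<mu> ! 0 + \<mu> ! p \<ge> 2 * int p + int q
            \<longrightarrow> (\<forall>\<tau>\<in>Omega p q. \<not> deficient p q \<mu> \<tau>))
       \<and> (\<mu> ! 0 \<ge> int q + 1 \<and> \<mu> ! p \<le> int p \<and> \<mu> ! 0 + \<mu> ! p \<ge> int p + 2 * int q
            \<longrightarrow> (\<forall>\<tau>\<in>Omega p q. \<not> deficient p q \<mu> \<tau>))"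
proof -
  have "1 \<le> q"
    using assms(1,2) by simp
  have "\<not> deficient p q \<mu> \<tau>"
    if \<tau>: "\<tau> \<in> Omega p q"
      and heads: "int p + 1 \<le> \<mu> ! p \<and> 2 * int p + int q \<le> \<mu> ! 0 + \<mu> ! p
                   \<or> int q + 1 \<le> \<mu> ! 0 \<and> int p + 2 * int q \<le> \<mu> ! 0 + \<mu> ! p"
    for \<tau>
  proof -
    define \<nu> where "\<nu> = wsub \<mu> \<tau>"
    have "length \<tau> = p + q"
      using \<tau> unfolding Omega_def by simp
    then have \<nu>: "length \<nu> = p + q" "\<nu> ! 0 = \<mu> ! 0 - \<tau> ! 0" "\<nu> ! p = \<mu> ! p - \<tau> ! p"
      using assms(1,3) \<open>1 \<le> q\<close> by (simp_all add: \<nu>_def wsub_def)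
    have "1 \<le> \<nu> ! p \<and> \<nu> ! 0 + \<nu> ! p > int p \<or> 1 \<le> \<nu> ! 0 \<and> \<nu> ! 0 + \<nu> ! p > int q"
      using heads Omega_head_bounds[OF \<tau> assms(1) \<open>1 \<le> q\<close>] \<nu>(2,3) by arith
    then have "knorm p q (wsub \<nu> (beta p q)) < knorm p q \<nu>"
      by (rule knorm_wsub_beta_less[OF assms(1) \<open>1 \<le> q\<close> \<nu>(1)])
    then show ?thesis
      unfolding deficient_def \<nu>_def by simp
  qed
  then show ?thesis
    by auto
qed

end
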